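(* Let $d\ge1$ and let $G$ be the graphical 2-sum of two graphs $G_1$ and $G_2$ along an edge $e$. Suppose that $e$ is not a coloop in either $\mathcal{R}_d(G_1)$ or $\mathcal{R}_d(G_2)$. Then $G$ is a $k$-fold $\mathcal{R}_d$-circuit if and only if $G_1$ is a $k_1$-fold $\mathcal{R}_d$-circuit and $G_2$ is a $k_2$-fold $\mathcal{R}_d$-circuit with $k_1+k_2=k+1$.
   Context: For a graph $G=(V,E)$ and a generic $p:V\to\mathbb{R}^d$ (coordinates algebraically independent over $\mathbb{Q}$), the rigidity matrix has a row for each $uv\in E$ with $p(u)-p(v)$ in the $d$ columns of $u$, $p(v)-p(u)$ in those of $v$, zeros elsewhere; $\mathcal{R}_d(G)$ is its row matroid, with rank $r_d$. A coloop is an element in no circuit. For graphs $G_1,G_2$ with $G_1\cap G_2\cong K_2$ and $E(G_1)\cap E(G_2)=\{e\}$, their graphical 2-sum along $e$ is $(G_1\cup G_2)-e$. A set of edges is cyclic if it is a union of $\mathcal{R}_d$-circuits; a graph with edge set $D$ is a $k$-fold $\mathcal{R}_d$-circuit if $D$ is cyclic and $r_d(D)=|D|-k$. *)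

theory Defs
  imports Complex_Main
begin

definition simple_graph :: "'a set \<Rightarrow> 'a set set \<Rightarrow> bool" where
  "simple_graph V E \<longleftrightarrow> finite V \<and> (\<forall>e\<in>E. card e = 2 \<and> e \<subseteq> V)"

text \<open>A polynomial is a finitely supported coefficient function on
  monomials (exponent vectors supported in I).\<close>
definition alg_indep_Q :: "'i set \<Rightarrow> ('i \<Rightarrow> real) \<Rightarrow> bool" where
  "alg_indep_Q I x \<longleftrightarrow>
     (\<forall>c :: ('i \<Rightarrow> nat) \<Rightarrow> rat.
        finite {m. c m \<noteq> 0} \<longrightarrow>
        (\<forall>m. c m \<noteq> 0 \<longrightarrow> (\<forall>i. i \<notin> I \<longrightarrow> m i = 0)) \<longrightarrow>
        (\<Sum>m\<in>{m. c m \<noteq> 0}. of_rat (c m) * (\<Prod>i\<in>I. x i ^ m i)) = 0 \<longrightarrow>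
        (\<forall>m. c m = 0))"

definition generic :: "nat \<Rightarrow> 'a set \<Rightarrow> ('a \<Rightarrow> nat \<Rightarrow> real) \<Rightarrow> bool" where
  "generic d V p \<longleftrightarrow> alg_indep_Q (V \<times> {..<d}) (\<lambda>(v, i). p v i)"

text \<open>Row of the rigidity matrix for edge e = {u,v}: p(u)-p(v) in the d columns
  of u, p(v)-p(u) in those of v, zero elsewhere. Columns are indexed by (w,i).\<close>
definition rig_row :: "nat \<Rightarrow> ('a \<Rightarrow> nat \<Rightarrow> real) \<Rightarrow> 'a set \<Rightarrow> 'a \<times> nat \<Rightarrow> real" where
  "rig_row d p e = (\<lambda>(w, i). if w \<in> e \<and> i < d then p w i - p (the_elem (e - {w})) i else 0)"

definition rig_indep :: "nat \<Rightarrow> ('a \<Rightarrow> nat \<Rightarrow> real) \<Rightarrow> 'a set set \<Rightarrow> bool" where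
  "rig_indep d p F \<longleftrightarrow>
     (\<forall>c :: 'a set \<Rightarrow> real. (\<forall>x. (\<Sum>e\<in>F. c e * rig_row d p e x) = 0) \<longrightarrow> (\<forall>e\<in>F. c e = 0))"

definition rig_rank :: "nat \<Rightarrow> ('a \<Rightarrow> nat \<Rightarrow> real) \<Rightarrow> 'a set set \<Rightarrow> nat" where
  "rig_rank d p F = Max (card ` {I. I \<subseteq> F \<and> rig_indep d p I})"

definition rig_circuit :: "nat \<Rightarrow> ('a \<Rightarrow> nat \<Rightarrow> real) \<Rightarrow> 'a set set \<Rightarrow> bool" where
  "rig_circuit d p C \<longleftrightarrow> \<not> rig_indep d p C \<and> (\<forall>C'. C' \<subset> C \<longrightarrow> rig_indep d p C')"

definition rig_coloop :: "nat \<Rightarrow> ('a \<Rightarrow> nat \<Rightarrow> real) \<Rightarrow> 'a set set \<Rightarrow> 'a set \<Rightarrow> bool" where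
  "rig_coloop d p E e \<longleftrightarrow> e \<in> E \<and> \<not> (\<exists>C. C \<subseteq> E \<and> rig_circuit d p C \<and> e \<in> C)"

definition rig_cyclic :: "nat \<Rightarrow> ('a \<Rightarrow> nat \<Rightarrow> real) \<Rightarrow> 'a set set \<Rightarrow> bool" where
  "rig_cyclic d p D \<longleftrightarrow> (\<exists>\<C>. (\<forall>C\<in>\<C>. rig_circuit d p C) \<and> \<Union>\<C> = D)"

definition k_fold_circuit :: "nat \<Rightarrow> ('a \<Rightarrow> nat \<Rightarrow> real) \<Rightarrow> nat \<Rightarrow> 'a set set \<Rightarrow> bool" where
  "k_fold_circuit d p k D \<longleftrightarrow> rig_cyclic d p D \<and> int (rig_rank d p D) = int (card D) - int k"

definition two_sum :: "'a set \<Rightarrow> 'a set set \<Rightarrow> 'a set \<Rightarrow> 'a set set \<Rightarrow> 'a set \<Rightarrow> 'a set \<Rightarrow> 'a set set \<Rightarrow> bool" where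
  "two_sum V1 E1 V2 E2 e V E \<longleftrightarrow>
     simple_graph V1 E1 \<and> simple_graph V2 E2 \<and>
     V1 \<inter> V2 = e \<and> E1 \<inter> E2 = {e} \<and>
     V = V1 \<union> V2 \<and> E = (E1 \<union> E2) - {e}"

end

theory Submission
  imports Defs "HOL-Library.Function_Algebras"
begin

text \<open>Regard \<open>\<R>\<^sub>d\<close> as the row space of the rigidity matrix inside the real vector space of
  functions on the columns. A vector lying in the row spaces of both \<open>G\<^sub>1\<close> and \<open>G\<^sub>2\<close> is
  supported on the columns of the two shared vertices \<open>u, v\<close> and annihilates every trivial
  infinitesimal motion; testing against translations and rotations shows that it is a multiple of
  the row of \<open>e = uv\<close>, which is nonzero by genericity. So the two row spaces meet exactly in
  the line spanned by the row of \<open>e\<close>, and since \<open>e\<close> is not a coloop on either side, that row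
  already lies in the span of the other edges of each side. A dimension count now gives
  \<open>r(G) + 1 = r(G\<^sub>1) + r(G\<^sub>2)\<close>, and exchanging the row of \<open>e\<close> between the sides shows that
  every edge of \<open>G\<close> lies in a circuit iff the same holds in \<open>G\<^sub>1\<close> and \<open>G\<^sub>2\<close>. As
  \<open>|E| + 2 = |E\<^sub>1| + |E\<^sub>2|\<close>, the defects satisfy \<open>k + 1 = k\<^sub>1 + k\<^sub>2\<close>.\<close>

section \<open>Linear algebra\<close>

lemma (in vector_space) independent_Un:
  assumes "independent S" "independent T" "span S \<inter> span T \<subseteq> {0}"
  shows "independent (S \<union> T)"
proof
  assume "dependent (S \<union> T)"
  then obtain a where a: "a \<in> S \<union> T" "a \<in> span ((S - {a}) \<union> (T - {a}))"
    unfolding dependent_def by (metis Un_Diff)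
  then obtain s t where st: "a = s + t" "s \<in> span (S - {a})" "t \<in> span (T - {a})"
    unfolding span_Un by blast
  have s: "s \<in> span S" and t: "t \<in> span T"
    using st span_mono[of "S - {a}" S] span_mono[of "T - {a}" T] by auto
  show False
  proof (cases "a \<in> S")
    case True
    then have "t \<in> span S" using st(1) s span_diff[of a S s] span_base[of a S] by simp
    then have "a \<in> span (S - {a})" using st t assms(3) by auto
    then show ?thesis using True assms(1) dependent_def by blast
  next
    case False
    then have "a \<in> T" using a(1) by blast
    then have "s \<in> span T" using st(1) t span_diff[of a T t] span_base[of a T] by simp
    then have "a \<in> span (T - {a})" using st s assms(3) by auto
    then show ?thesis using \<open>a \<in> T\<close> assms(2) dependent_def by blast
  qed
qed

lemma (in vector_space) span_Int_span_Diff_singleton: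
  assumes "independent B" "x \<in> B" "span A \<inter> span B \<subseteq> span {x}"
  shows "span A \<inter> span (B - {x}) \<subseteq> {0}"
proof
  fix y assume y: "y \<in> span A \<inter> span (B - {x})"
  moreover have "span (B - {x}) \<subseteq> span B" by (rule span_mono) blast
  ultimately have "y \<in> span {x}" using assms(3) by blast
  then obtain k where k: "y = k *s x" using span_singleton by blast
  have "k = 0"
  proof (rule ccontr)
    assume "k \<noteq> 0"
    then have "x = inverse k *s y" by (simp add: k)
    then have "x \<in> span (B - {x})" using y span_scale by auto
    then show False using assms(1,2) dependent_def by blast
  qed
  then show "y \<in> {0}" using k by simp
qed

text \<open>Grassmann's formula for two spans meeting in a line. The library's \<open>dim_sums_Int\<close> needs a
  finite-dimensional ambient space, which the space of rigidity rows is not.\<close>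

lemma (in vector_space) dim_Un_span_Int_singleton:
  assumes "finite A" "finite B" "x \<in> A" "x \<in> B" "x \<noteq> 0"
    and "span A \<inter> span B \<subseteq> span {x}"
  shows "dim (A \<union> B) + 1 = dim A + dim B"
proof -
  have "independent {x}" using assms(5) by simp
  then obtain B1 where B1: "{x} \<subseteq> B1" "B1 \<subseteq> A" "independent B1" "A \<subseteq> span B1"
    using maximal_independent_subset_extend[of "{x}" A] assms(3) by blast
  obtain B2 where B2: "{x} \<subseteq> B2" "B2 \<subseteq> B" "independent B2" "B \<subseteq> span B2"
    using maximal_independent_subset_extend[of "{x}" B] assms(4) \<open>independent {x}\<close> by blast
  have "span B1 \<inter> span B2 \<subseteq> span {x}"
    using Int_mono[OF span_mono[OF B1(2)] span_mono[OF B2(2)]] assms(6) by (rule subset_trans)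
  moreover have "x \<in> B2" using B2(1) by simp
  ultimately have trivial_Int: "span B1 \<inter> span (B2 - {x}) \<subseteq> {0}"
    using span_Int_span_Diff_singleton[OF B2(3)] by blast
  have "independent (B2 - {x})" by (rule independent_mono[OF B2(3)]) blast
  then have indep: "independent (B1 \<union> (B2 - {x}))"
    by (rule independent_Un[OF B1(3) _ trivial_Int])
  have "B1 \<inter> (B2 - {x}) = {}"
  proof (rule ccontr)
    assume "B1 \<inter> (B2 - {x}) \<noteq> {}"
    then obtain y where "y \<in> B1" "y \<in> B2 - {x}" by blast
    then have "y \<in> span B1 \<inter> span (B2 - {x})" by (simp add: span_base)
    then have "y = 0" using trivial_Int by blast
    then show False using \<open>y \<in> B1\<close> B1(3) dependent_zero by blast
  qed
  moreover have "finite B1" "finite B2"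
    using B1(2) B2(2) assms(1,2) finite_subset by auto
  ultimately have "card (B1 \<union> (B2 - {x})) + 1 = card B1 + card B2"
    using B2(1) card_Suc_Diff1[of B2 x] by (simp add: card_Un_disjoint)
  moreover have "card (B1 \<union> (B2 - {x})) = dim (A \<union> B)"
  proof (rule basis_card_eq_dim)
    show "B1 \<union> (B2 - {x}) \<subseteq> A \<union> B" using B1(2) B2(2) by auto
    have "span B2 \<subseteq> span (B1 \<union> (B2 - {x}))"
      using B1(1) by (intro span_mono) auto
    then show "A \<union> B \<subseteq> span (B1 \<union> (B2 - {x}))"
      using B1(4) B2(4) span_mono[of B1 "B1 \<union> (B2 - {x})"] by auto
  qed (fact indep)
  ultimately show ?thesis
    using basis_card_eq_dim[OF B1(2,4,3)] basis_card_eq_dim[OF B2(2,4,3)] by simp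
qed

lemma sum_fun_apply: "(\<Sum>i\<in>I. f i) x = (\<Sum>i\<in>I. f i x)"
  by (induction I rule: infinite_finite_induct) auto

interpretation real_fun: vector_space "\<lambda>(c::real) (f::'b \<Rightarrow> real) x. c * f x"
  by unfold_locales (auto simp: fun_eq_iff algebra_simps)

section \<open>The rigidity matroid as a row space\<close>

abbreviation row_space :: "nat \<Rightarrow> ('a \<Rightarrow> nat \<Rightarrow> real) \<Rightarrow> 'a set set \<Rightarrow> ('a \<times> nat \<Rightarrow> real) set"
  where "row_space d p F \<equiv> real_fun.span (rig_row d p ` F)"

lemma sum_scaled_rows:
  "(\<Sum>f\<in>F. (\<lambda>z. c f * rig_row d p f z)) = (\<lambda>z. \<Sum>f\<in>F. c f * rig_row d p f z)"
  by (simp add: fun_eq_iff sum_fun_apply)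

lemma rig_indep_iff:
  assumes "finite F"
  shows "rig_indep d p F \<longleftrightarrow>
    inj_on (rig_row d p) F \<and> real_fun.independent (rig_row d p ` F)"
proof
  assume indep: "rig_indep d p F"
  show "inj_on (rig_row d p) F \<and> real_fun.independent (rig_row d p ` F)"
  proof
    show inj: "inj_on (rig_row d p) F"
    proof (rule inj_onI, rule ccontr)
      fix f g assume fg: "f \<in> F" "g \<in> F" "rig_row d p f = rig_row d p g" "f \<noteq> g"
      define c :: "'a set \<Rightarrow> real" where "c h = (if h = f then 1 else 0) - (if h = g then 1 else 0)" for h
      have "\<forall>z. (\<Sum>h\<in>F. c h * rig_row d p h z) = 0"
        using fg assms unfolding c_def
        by (simp add: left_diff_distrib sum_subtractf if_distrib[of "\<lambda>x. x * _"] cong: if_cong)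
      then have "c f = 0" using indep fg(1) unfolding rig_indep_def by blast
      then show False using fg(4) by (simp add: c_def)
    qed
    show "real_fun.independent (rig_row d p ` F)"
      unfolding real_fun.dependent_finite[OF finite_imageI[OF assms]]
    proof clarify
      fix u f assume "(\<Sum>v\<in>rig_row d p ` F. (\<lambda>z. u v * v z)) = 0" "f \<in> F" "u (rig_row d p f) \<noteq> 0"
      moreover from this(1) have "\<forall>z. (\<Sum>e\<in>F. u (rig_row d p e) * rig_row d p e z) = 0"
        using inj by (simp add: sum.reindex sum_scaled_rows fun_eq_iff)
      ultimately show False
        using indep[unfolded rig_indep_def, rule_format, of "\<lambda>e. u (rig_row d p e)"] by auto
    qed
  qed
next
  assume "inj_on (rig_row d p) F \<and> real_fun.independent (rig_row d p ` F)"
  then have inj: "inj_on (rig_row d p) F" and indep: "real_fun.independent (rig_row d p ` F)"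
    by auto
  show "rig_indep d p F"
    unfolding rig_indep_def
  proof (intro allI impI ballI)
    fix c f assume "\<forall>z. (\<Sum>e\<in>F. c e * rig_row d p e z) = 0" "f \<in> F"
    then show "c f = 0"
      using indep inj unfolding real_fun.dependent_finite[OF finite_imageI[OF assms]]
      by (auto simp: sum.reindex sum_scaled_rows fun_eq_iff
          elim!: allE[of _ "\<lambda>v. c (inv_into F (rig_row d p) v)"])
  qed
qed

lemma rig_indep_subset: "finite F \<Longrightarrow> rig_indep d p F \<Longrightarrow> G \<subseteq> F \<Longrightarrow> rig_indep d p G"
  using finite_subset inj_on_subset real_fun.independent_mono
  by (metis image_mono rig_indep_iff)

lemma rig_indep_insert:
  assumes "finite F" "f \<notin> F"
  shows "rig_indep d p (insert f F) \<longleftrightarrow> rig_indep d p F \<and> rig_row d p f \<notin> row_space d p F"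
  using assms real_fun.span_base[of "rig_row d p f" "rig_row d p ` F"]
  by (auto simp: rig_indep_iff real_fun.independent_insert)

lemma rig_indep_if_irredundant:
  assumes "finite F" and irred: "\<forall>f\<in>F. rig_row d p f \<notin> row_space d p (F - {f})"
  shows "rig_indep d p F"
proof -
  have "inj_on (rig_row d p) F"
  proof (rule inj_onI, rule ccontr)
    fix f g assume "f \<in> F" "g \<in> F" "rig_row d p f = rig_row d p g" "f \<noteq> g"
    then have "rig_row d p f \<in> row_space d p (F - {f})" by (auto intro: real_fun.span_base)
    then show False using irred \<open>f \<in> F\<close> by blast
  qed
  moreover have "real_fun.independent (rig_row d p ` F)"
  proof
    assume "real_fun.dependent (rig_row d p ` F)"
    then obtain f where "f \<in> F" "rig_row d p f \<in> real_fun.span (rig_row d p ` F - {rig_row d p f})"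
      unfolding real_fun.dependent_def by blast
    moreover have "rig_row d p ` F - {rig_row d p f} \<subseteq> rig_row d p ` (F - {f})" by blast
    ultimately show False using irred real_fun.span_mono by blast
  qed
  ultimately show ?thesis using assms(1) rig_indep_iff by blast
qed

lemma rig_rank_eq_dim:
  assumes "finite F"
  shows "rig_rank d p F = real_fun.dim (rig_row d p ` F)"
proof -
  obtain B where B: "B \<subseteq> rig_row d p ` F" "real_fun.independent B"
    "rig_row d p ` F \<subseteq> real_fun.span B" "card B = real_fun.dim (rig_row d p ` F)"
    using real_fun.basis_exists by metis
  have "finite B" using B(1) assms finite_surj by blast
  show ?thesis
    unfolding rig_rank_def
  proof (rule Max_eqI)
    show "finite (card ` {I. I \<subseteq> F \<and> rig_indep d p I})"
      using assms by simp
  next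
    fix n assume "n \<in> card ` {I. I \<subseteq> F \<and> rig_indep d p I}"
    then obtain I where I: "I \<subseteq> F" "rig_indep d p I" "n = card I" by blast
    then have "inj_on (rig_row d p) I" "real_fun.independent (rig_row d p ` I)"
      using rig_indep_iff[of I] finite_subset[OF I(1) assms] by auto
    moreover have "rig_row d p ` I \<subseteq> real_fun.span B" using I(1) B(3) by blast
    ultimately show "n \<le> real_fun.dim (rig_row d p ` F)"
      using real_fun.independent_span_bound[OF \<open>finite B\<close>] I(3) B(4) by (metis card_image)
  next
    obtain I where I: "I \<subseteq> F" "inj_on (rig_row d p) I" "B = rig_row d p ` I"
      using B(1) subset_image_inj by metis
    then have "rig_indep d p I"
      using rig_indep_iff[of I] finite_subset[OF I(1) assms] B(2) by auto
    then show "real_fun.dim (rig_row d p ` F) \<in> card ` {I. I \<subseteq> F \<and> rig_indep d p I}"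
      using I B(4) by (intro image_eqI[where x = I]) (auto simp: card_image)
  qed
qed

lemma rig_rank_le_card: "finite F \<Longrightarrow> rig_rank d p F \<le> card F"
  using real_fun.dim_le_card' card_image_le le_trans by (metis finite_imageI rig_rank_eq_dim)

lemma rig_circuit_row_in_row_space:
  assumes "finite D" "C \<subseteq> D" "rig_circuit d p C" "f \<in> C"
  shows "rig_row d p f \<in> row_space d p (D - {f})"
proof -
  have "finite (C - {f})" using assms(1,2) finite_subset by blast
  moreover have "rig_indep d p (C - {f})" and "\<not> rig_indep d p (insert f (C - {f}))"
    using assms(3,4) unfolding rig_circuit_def by (auto simp: insert_absorb)
  ultimately have "rig_row d p f \<in> row_space d p (C - {f})"
    using rig_indep_insert[of "C - {f}" f d p] by blast
  moreover have "row_space d p (C - {f}) \<subseteq> row_space d p (D - {f})"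
    using assms(2) by (intro real_fun.span_mono image_mono Diff_mono) auto
  ultimately show ?thesis by blast
qed

lemma rig_circuit_insert_minimal:
  assumes "finite S" "f \<notin> S" "rig_row d p f \<in> row_space d p S"
    and minimal: "\<And>g. g \<in> S \<Longrightarrow> rig_row d p f \<notin> row_space d p (S - {g})"
  shows "rig_circuit d p (insert f S)"
proof -
  have "rig_indep d p S"
  proof (rule rig_indep_if_irredundant[OF assms(1)], intro ballI notI)
    fix g assume "g \<in> S" "rig_row d p g \<in> row_space d p (S - {g})"
    moreover have "rig_row d p ` S = insert (rig_row d p g) (rig_row d p ` (S - {g}))"
      using \<open>g \<in> S\<close> by blast
    ultimately have "row_space d p S = row_space d p (S - {g})"
      using real_fun.span_redundant by metis
    then show False using minimal[OF \<open>g \<in> S\<close>] assms(3) by simp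
  qed
  have delete_one: "rig_indep d p (insert f S - {g})" if "g \<in> insert f S" for g
  proof (cases "g = f")
    case True
    then show ?thesis using \<open>rig_indep d p S\<close> assms(2) by simp
  next
    case False
    then have "g \<in> S" and eq: "insert f S - {g} = insert f (S - {g})" using that by auto
    have "rig_indep d p (S - {g})"
      by (rule rig_indep_subset[OF assms(1) \<open>rig_indep d p S\<close> Diff_subset])
    moreover have "rig_row d p f \<notin> row_space d p (S - {g})" by (rule minimal[OF \<open>g \<in> S\<close>])
    moreover have "finite (S - {g})" "f \<notin> S - {g}" using assms(1,2) by auto
    ultimately show ?thesis unfolding eq by (simp add: rig_indep_insert)
  qed
  have "rig_indep d p T" if T: "T \<subset> insert f S" for T
  proof -
    obtain g where "g \<in> insert f S" "g \<notin> T" using psubset_imp_ex_mem[OF T] by blast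
    then have g: "g \<in> insert f S" "T \<subseteq> insert f S - {g}" using T by auto
    have "finite (insert f S - {g})" using assms(1) by simp
    then show ?thesis by (rule rig_indep_subset[OF _ delete_one[OF g(1)] g(2)])
  qed
  moreover have "\<not> rig_indep d p (insert f S)"
    by (simp add: rig_indep_insert[OF assms(1,2)] assms(3))
  ultimately show ?thesis unfolding rig_circuit_def by blast
qed

lemma rig_circuit_through_row:
  assumes "finite D" "f \<in> D" "rig_row d p f \<in> row_space d p (D - {f})"
  obtains C where "C \<subseteq> D" "f \<in> C" "rig_circuit d p C"
proof -
  let ?spans = "\<lambda>S. S \<subseteq> D - {f} \<and> rig_row d p f \<in> row_space d p S"
  obtain S where S: "?spans S" and least: "\<And>S'. ?spans S' \<Longrightarrow> card S \<le> card S'"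
    using ex_has_least_nat[of ?spans "D - {f}" card] assms(3) by blast
  have "finite S" using S assms(1) finite_subset by blast
  have "rig_row d p f \<notin> row_space d p (S - {g})" if "g \<in> S" for g
  proof
    assume "rig_row d p f \<in> row_space d p (S - {g})"
    moreover have "S - {g} \<subseteq> D - {f}" using S by blast
    ultimately have "card S \<le> card (S - {g})" using least by blast
    then show False using card_Diff1_less[OF \<open>finite S\<close> \<open>g \<in> S\<close>] by simp
  qed
  moreover have "f \<notin> S" using S by blast
  ultimately have "rig_circuit d p (insert f S)"
    using rig_circuit_insert_minimal[OF \<open>finite S\<close>] S by blast
  moreover have "insert f S \<subseteq> D" using S assms(2) by blast
  ultimately show ?thesis using that by blast
qed

lemma rig_cyclic_iff:
  assumes "finite D"
  shows "rig_cyclic d p D \<longleftrightarrow> (\<forall>f\<in>D. rig_row d p f \<in> row_space d p (D - {f}))"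
proof
  assume "rig_cyclic d p D"
  then obtain \<C> where \<C>: "\<forall>C\<in>\<C>. rig_circuit d p C" "\<Union>\<C> = D" unfolding rig_cyclic_def by blast
  show "\<forall>f\<in>D. rig_row d p f \<in> row_space d p (D - {f})"
  proof
    fix f assume "f \<in> D"
    then obtain C where "C \<in> \<C>" "f \<in> C" using \<C>(2) by blast
    moreover from this(1) have "C \<subseteq> D" using \<C>(2) by blast
    ultimately show "rig_row d p f \<in> row_space d p (D - {f})"
      using rig_circuit_row_in_row_space[OF assms] \<C>(1) by blast
  qed
next
  assume spanned: "\<forall>f\<in>D. rig_row d p f \<in> row_space d p (D - {f})"
  have "\<Union>{C. C \<subseteq> D \<and> rig_circuit d p C} = D"
  proof (intro equalityI subsetI)
    fix f assume "f \<in> D"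
    then obtain C where "C \<subseteq> D" "f \<in> C" "rig_circuit d p C"
      using rig_circuit_through_row[OF assms] spanned by metis
    then show "f \<in> \<Union>{C. C \<subseteq> D \<and> rig_circuit d p C}" by blast
  qed blast
  then show "rig_cyclic d p D"
    unfolding rig_cyclic_def by (intro exI[of _ "{C. C \<subseteq> D \<and> rig_circuit d p C}"]) auto
qed

lemma not_coloop_row_in_row_space:
  assumes "finite E" "e \<in> E" "\<not> rig_coloop d p E e"
  shows "rig_row d p e \<in> row_space d p (E - {e})"
proof -
  obtain C where "C \<subseteq> E" "rig_circuit d p C" "e \<in> C"
    using assms(2,3) unfolding rig_coloop_def by blast
  then show ?thesis by (rule rig_circuit_row_in_row_space[OF assms(1)])
qed

lemma k_fold_circuit_iff:
  "k_fold_circuit d p k D \<longleftrightarrow> rig_cyclic d p D \<and> rig_rank d p D + k = card D"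
  unfolding k_fold_circuit_def by linarith

section \<open>Edges and generic placements\<close>

lemma simple_graph_finite_edges: "simple_graph V E \<Longrightarrow> finite E"
  unfolding simple_graph_def by (meson Pow_iff finite_Pow_iff finite_subset subsetI)

lemma simple_graph_edgeE:
  assumes "simple_graph V E" "f \<in> E"
  obtains x y where "x \<noteq> y" "f = {x, y}" "x \<in> V" "y \<in> V"
  using assms unfolding simple_graph_def by (metis card_2_iff insert_subset)

lemma rig_row_doubleton:
  assumes "x \<noteq> y"
  shows "rig_row d p {x, y} (z, i) =
    (if i < d \<and> z = x then p x i - p y i else if i < d \<and> z = y then p y i - p x i else 0)"
  using assms by (auto simp: rig_row_def insert_Diff_if)

lemma alg_indep_Q_inj_on:
  assumes "alg_indep_Q I x" "finite I"
  shows "inj_on x I"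
proof (rule inj_onI, rule ccontr)
  fix a b assume ab: "a \<in> I" "b \<in> I" "x a = x b" "a \<noteq> b"
  define var :: "'a \<Rightarrow> 'a \<Rightarrow> nat" where "var j k = (if k = j then 1 else 0)" for j k
  have var_eval: "(\<Prod>k\<in>I. x k ^ var j k) = x j" if "j \<in> I" for j
    using that assms(2) by (simp add: var_def if_distrib[of "power _"] cong: if_cong)
  have "var a \<noteq> var b"
  proof
    assume "var a = var b"
    then have "var a a = var b a" by simp
    then show False using ab(4) by (simp add: var_def)
  qed
  \<comment> \<open>the polynomial \<open>X\<^sub>a - X\<^sub>b\<close>\<close>
  define c :: "('a \<Rightarrow> nat) \<Rightarrow> rat"
    where "c m = (if m = var a then 1 else if m = var b then -1 else 0)" for m
  have supp: "{m. c m \<noteq> 0} = {var a, var b}"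
    using \<open>var a \<noteq> var b\<close> by (auto simp: c_def)
  have "finite {m. c m \<noteq> 0}" using supp by simp
  moreover have "\<forall>m. c m \<noteq> 0 \<longrightarrow> (\<forall>k. k \<notin> I \<longrightarrow> m k = 0)"
    using ab by (auto simp: c_def var_def)
  moreover have "(\<Sum>m\<in>{m. c m \<noteq> 0}. of_rat (c m) * (\<Prod>k\<in>I. x k ^ m k)) = 0"
    unfolding supp using \<open>var a \<noteq> var b\<close> ab var_eval by (simp add: c_def)
  ultimately have "c (var a) = 0"
    using assms(1) unfolding alg_indep_Q_def by blast
  then show False by (simp add: c_def)
qed

lemma generic_coordinates_distinct:
  assumes "generic d V p" "finite V" "x \<in> V" "y \<in> V" "x \<noteq> y" "i < d"
  shows "p x i \<noteq> p y i"
  using alg_indep_Q_inj_on[of "V \<times> {..<d}" "\<lambda>(v, i). p v i"] assms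
  by (auto simp: generic_def inj_on_def)

section \<open>Trivial motions and the shared edge\<close>

text \<open>The infinitesimal motions of the complete framework at \<open>p\<close>, that is, the trivial motions.\<close>

definition trivial_motion :: "nat \<Rightarrow> ('a \<Rightarrow> nat \<Rightarrow> real) \<Rightarrow> ('a \<Rightarrow> nat \<Rightarrow> real) \<Rightarrow> bool" where
  "trivial_motion d p q \<longleftrightarrow> (\<forall>x y. (\<Sum>i<d. (p x i - p y i) * (q x i - q y i)) = 0)"

lemma trivial_motion_translation: "trivial_motion d p (\<lambda>z i. t i)"
  by (simp add: trivial_motion_def)

lemma trivial_motion_rotation:
  "trivial_motion d p (\<lambda>z i. c i * (\<Sum>j<d. b j * p z j) - b i * (\<Sum>j<d. c j * p z j))"
  unfolding trivial_motion_def
proof (intro allI)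
  fix x y
  define r where "r i = p x i - p y i" for i
  define B where "B = (\<Sum>j<d. b j * r j)"
  define C where "C = (\<Sum>j<d. c j * r j)"
  have "(\<Sum>j<d. b j * p x j) - (\<Sum>j<d. b j * p y j) = B"
    and "(\<Sum>j<d. c j * p x j) - (\<Sum>j<d. c j * p y j) = C"
    by (simp_all add: B_def C_def r_def sum_subtractf[symmetric] algebra_simps)
  then have "(\<Sum>i<d. (p x i - p y i) * (c i * (\<Sum>j<d. b j * p x j) - b i * (\<Sum>j<d. c j * p x j)
      - (c i * (\<Sum>j<d. b j * p y j) - b i * (\<Sum>j<d. c j * p y j))))
    = (\<Sum>i<d. r i * (c i * B - b i * C))"
    by (simp add: r_def algebra_simps)
  also have "\<dots> = (\<Sum>i<d. c i * r i) * B - (\<Sum>i<d. b i * r i) * C"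
    by (simp add: algebra_simps sum_subtractf sum_distrib_left sum_distrib_right)
  also have "\<dots> = 0"
    by (simp add: B_def C_def)
  finally show "(\<Sum>i<d. (p x i - p y i) * (c i * (\<Sum>j<d. b j * p x j) - b i * (\<Sum>j<d. c j * p x j)
      - (c i * (\<Sum>j<d. b j * p y j) - b i * (\<Sum>j<d. c j * p y j)))) = 0" .
qed

lemma parallel_if_orthogonal_complement_orthogonal:
  fixes a b :: "nat \<Rightarrow> real"
  assumes "k < d" "b k \<noteq> 0"
    and orth: "\<And>c. (\<Sum>i<d. c i * b i) = 0 \<Longrightarrow> (\<Sum>i<d. a i * c i) = 0"
  shows "\<exists>l. \<forall>i<d. a i = l * b i"
proof -
  define N where "N = (\<Sum>i<d. b i * b i)"
  define W where "W = (\<Sum>i<d. a i * b i)"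
  define c where "c i = N * a i - W * b i" for i
  have "N > 0" unfolding N_def using assms(1,2) by (intro sum_pos2[of _ k]) (auto simp: zero_less_mult_iff)
  have "(\<Sum>i<d. c i * b i) = N * W - W * N"
    by (simp add: c_def N_def W_def left_diff_distrib sum_subtractf sum_distrib_left mult.assoc)
  then have cb: "(\<Sum>i<d. c i * b i) = 0" by simp
  then have ac: "(\<Sum>i<d. a i * c i) = 0" by (rule orth)
  have "(\<Sum>i<d. c i * c i) = N * (\<Sum>i<d. a i * c i) - W * (\<Sum>i<d. c i * b i)"
    by (simp add: c_def sum_subtractf sum_distrib_left sum.distrib algebra_simps)
  then have "(\<Sum>i<d. c i * c i) = 0" using ac cb by simp
  then have "c i = 0" if "i < d" for i
    using that by (simp add: sum_nonneg_eq_0_iff)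
  then have "\<forall>i<d. a i = W / N * b i"
    using \<open>N > 0\<close> by (simp add: c_def field_simps)
  then show ?thesis by blast
qed

lemma equilibrium_opposite:
  assumes equilibrium: "\<And>q. trivial_motion d p q \<Longrightarrow> (\<Sum>i<d. w (u, i) * q u i + w (v, i) * q v i) = 0"
    and "i < d"
  shows "w (v, i) = - w (u, i)"
proof -
  define t where "t i = w (u, i) + w (v, i)" for i
  have "(\<Sum>i<d. t i * t i) = 0"
    using equilibrium[OF trivial_motion_translation[of d p t]] by (simp add: t_def algebra_simps)
  then have "t i = 0" using assms(2) by (simp add: sum_nonneg_eq_0_iff)
  then show ?thesis by (simp add: t_def eq_neg_iff_add_eq_0)
qed

lemma equilibrium_parallel:
  assumes "k < d" "p u k \<noteq> p v k"
    and equilibrium: "\<And>q. trivial_motion d p q \<Longrightarrow> (\<Sum>i<d. w (u, i) * q u i + w (v, i) * q v i) = 0"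
  shows "\<exists>l. \<forall>i<d. w (u, i) = l * (p u i - p v i)"
proof -
  define b where "b i = p u i - p v i" for i
  have orth: "(\<Sum>i<d. w (u, i) * c i) = 0" if "(\<Sum>i<d. c i * b i) = 0" for c
  proof -
    define N where "N = (\<Sum>i<d. b i * b i)"
    have "N > 0"
      unfolding N_def b_def using assms(1,2) by (intro sum_pos2[of _ k]) (auto simp: zero_less_mult_iff)
    \<comment> \<open>the infinitesimal rotation in the plane of \<open>b\<close> and \<open>c\<close>\<close>
    define q where "q z i = c i * (\<Sum>j<d. b j * p z j) - b i * (\<Sum>j<d. c j * p z j)" for z i
    have "(\<Sum>j<d. b j * p u j) - (\<Sum>j<d. b j * p v j) = N"
      and "(\<Sum>j<d. c j * p u j) - (\<Sum>j<d. c j * p v j) = 0"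
      using that by (simp_all add: N_def b_def sum_subtractf[symmetric] algebra_simps)
    then have q_diff: "q u i - q v i = c i * N" for i
      by (simp add: q_def algebra_simps)
    have "0 = (\<Sum>i<d. w (u, i) * q u i + w (v, i) * q v i)"
      using equilibrium[OF trivial_motion_rotation[of d p c b]] by (simp add: q_def)
    also have "\<dots> = (\<Sum>i<d. w (u, i) * (q u i - q v i))"
      using equilibrium_opposite[OF equilibrium] by (intro sum.cong) (auto simp: algebra_simps)
    also have "\<dots> = N * (\<Sum>i<d. w (u, i) * c i)"
      by (simp add: q_diff sum_distrib_left algebra_simps)
    finally show ?thesis using \<open>N > 0\<close> by simp
  qed
  have "b k \<noteq> 0" using assms(2) by (simp add: b_def)
  then obtain l where "\<forall>i<d. w (u, i) = l * b i"
    using parallel_if_orthogonal_complement_orthogonal[OF assms(1) _ orth] by blast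
  then show ?thesis unfolding b_def by blast
qed

lemma equilibrium_two_points:
  assumes "u \<noteq> v" "k < d" "p u k \<noteq> p v k"
    and support: "\<And>z i. w (z, i) \<noteq> 0 \<Longrightarrow> z \<in> {u, v} \<and> i < d"
    and equilibrium: "\<And>q. trivial_motion d p q \<Longrightarrow> (\<Sum>i<d. w (u, i) * q u i + w (v, i) * q v i) = 0"
  shows "w \<in> real_fun.span {rig_row d p {u, v}}"
proof -
  obtain l where l: "\<forall>i<d. w (u, i) = l * (p u i - p v i)"
    using equilibrium_parallel[where p = p and w = w, OF assms(2,3) equilibrium] by blast
  have "w (y, i) = l * rig_row d p {u, v} (y, i)" for y i
    using support[of y i] l equilibrium_opposite[OF equilibrium, where i = i] assms(1)
    by (auto simp: rig_row_doubleton algebra_simps)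
  then have "w = (\<lambda>z. l * rig_row d p {u, v} z)" by auto
  then show ?thesis using real_fun.span_singleton by blast
qed

lemma sum_supported_on_two_points:
  fixes d :: nat
  assumes "finite V" "x \<in> V" "y \<in> V" "x \<noteq> y"
    and "\<And>z i. g (z, i) \<noteq> 0 \<Longrightarrow> z \<in> {x, y} \<and> i < d"
  shows "sum g (V \<times> {..<d}) = (\<Sum>i<d. g (x, i) + g (y, i))"
proof -
  have "sum g (V \<times> {..<d}) = sum g ({x, y} \<times> {..<d})"
    using assms by (intro sum.mono_neutral_right finite_cartesian_product) auto
  also have "\<dots> = (\<Sum>i<d. g (x, i) + g (y, i))"
    using assms(4) by (simp add: sum.cartesian_product' sum.distrib)
  finally show ?thesis .
qed

lemma row_space_vanishes:
  assumes "simple_graph V F" "w \<in> row_space d p F" "z \<notin> V \<or> \<not> i < d"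
  shows "w (z, i) = 0"
proof (rule real_fun.span_induct[OF assms(2), where P = "\<lambda>w. w (z, i) = 0"])
  show "real_fun.subspace {w. w (z, i) = 0}"
    by (simp add: real_fun.subspace_def)
  fix r assume "r \<in> rig_row d p ` F"
  then obtain f where "r = rig_row d p f" "f \<subseteq> V"
    using assms(1) by (auto simp: simple_graph_def)
  then show "r (z, i) = 0"
    using assms(3) by (auto simp: rig_row_def)
qed

lemma row_space_orthogonal_trivial_motion:
  assumes "simple_graph V F" "w \<in> row_space d p F" "trivial_motion d p q"
  shows "(\<Sum>(z, i)\<in>V \<times> {..<d}. w (z, i) * q z i) = 0"
proof (rule real_fun.span_induct[OF assms(2),
      where P = "\<lambda>w. (\<Sum>(z, i)\<in>V \<times> {..<d}. w (z, i) * q z i) = 0"])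
  show "real_fun.subspace {w. (\<Sum>(z, i)\<in>V \<times> {..<d}. w (z, i) * q z i) = 0}"
    by (simp add: real_fun.subspace_def case_prod_beta distrib_right sum.distrib mult.assoc
        sum_distrib_left[symmetric])
next
  fix r assume "r \<in> rig_row d p ` F"
  then obtain x y where xy: "x \<noteq> y" "x \<in> V" "y \<in> V" "r = rig_row d p {x, y}"
    using simple_graph_edgeE[OF assms(1)] by (metis imageE)
  have "finite V" using assms(1) by (simp add: simple_graph_def)
  have "z \<in> {x, y} \<and> i < d" if "r (z, i) * q z i \<noteq> 0" for z i
    using that xy by (auto simp: rig_row_doubleton split: if_splits)
  then have "(\<Sum>(z, i)\<in>V \<times> {..<d}. r (z, i) * q z i) = (\<Sum>i<d. r (x, i) * q x i + r (y, i) * q y i)"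
    using sum_supported_on_two_points[OF \<open>finite V\<close> xy(2,3,1), of "\<lambda>(z, i). r (z, i) * q z i"]
    by simp
  also have "\<dots> = (\<Sum>i<d. (p x i - p y i) * (q x i - q y i))"
    using xy by (intro sum.cong) (auto simp: rig_row_doubleton algebra_simps)
  also have "\<dots> = 0"
    using assms(3) by (simp add: trivial_motion_def)
  finally show "(\<Sum>(z, i)\<in>V \<times> {..<d}. r (z, i) * q z i) = 0" .
qed

lemma row_space_Int_subset_shared_edge:
  assumes "simple_graph V1 E1" "simple_graph V2 E2" "V1 \<inter> V2 = {u, v}" "u \<noteq> v"
    and "k < d" "p u k \<noteq> p v k"
  shows "row_space d p E1 \<inter> row_space d p E2 \<subseteq> real_fun.span {rig_row d p {u, v}}"
proof
  fix w assume w: "w \<in> row_space d p E1 \<inter> row_space d p E2"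
  have support: "z \<in> {u, v} \<and> i < d" if "w (z, i) \<noteq> 0" for z i
    using row_space_vanishes[OF assms(1)] row_space_vanishes[OF assms(2)] w assms(3) that
    by blast
  show "w \<in> real_fun.span {rig_row d p {u, v}}"
  proof (rule equilibrium_two_points[where p = p and w = w, OF assms(4-6)])
    show "\<And>z i. w (z, i) \<noteq> 0 \<Longrightarrow> z \<in> {u, v} \<and> i < d" by (fact support)
  next
    fix q assume "trivial_motion d p q"
    then have "(\<Sum>(z, i)\<in>V1 \<times> {..<d}. w (z, i) * q z i) = 0"
      using row_space_orthogonal_trivial_motion[OF assms(1)] w by blast
    moreover have "finite V1" "u \<in> V1" "v \<in> V1"
      using assms(1,3) by (auto simp: simple_graph_def)
    ultimately show "(\<Sum>i<d. w (u, i) * q u i + w (v, i) * q v i) = 0"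
      using sum_supported_on_two_points[of V1 u v "\<lambda>(z, i). w (z, i) * q z i" d] assms(4) support
      by auto
  qed
qed

section \<open>Two-sums\<close>

lemma row_in_row_space_two_sum_iff:
  assumes "E1 \<inter> E2 = {e}" "f \<in> E1" "f \<noteq> e"
    and shared: "row_space d p E1 \<inter> row_space d p E2 \<subseteq> real_fun.span {rig_row d p e}"
    and e2: "rig_row d p e \<in> row_space d p (E2 - {e})"
  shows "rig_row d p f \<in> row_space d p ((E1 \<union> E2) - {e} - {f})
    \<longleftrightarrow> rig_row d p f \<in> row_space d p (E1 - {f})"
proof
  assume "rig_row d p f \<in> row_space d p ((E1 \<union> E2) - {e} - {f})"
  moreover have "(E1 \<union> E2) - {e} - {f} = (E1 - {e, f}) \<union> (E2 - {e})"
    using assms(1,2) by blast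
  ultimately have "rig_row d p f \<in> real_fun.span (rig_row d p ` (E1 - {e, f}) \<union> rig_row d p ` (E2 - {e}))"
    by (simp add: image_Un)
  then obtain y1 y2 where y: "rig_row d p f = y1 + y2"
    "y1 \<in> row_space d p (E1 - {e, f})" "y2 \<in> row_space d p (E2 - {e})"
    unfolding real_fun.span_Un by blast
  have y1: "y1 \<in> row_space d p (E1 - {f})"
    using y(2) real_fun.span_mono[OF image_mono[of "E1 - {e, f}" "E1 - {f}"]] by blast
  have "rig_row d p f \<in> row_space d p E1" and "y1 \<in> row_space d p E1"
    using assms(2) y1 real_fun.span_mono[OF image_mono[of "E1 - {f}" E1]]
    by (auto intro: real_fun.span_base)
  then have "rig_row d p f - y1 \<in> row_space d p E1"
    by (rule real_fun.span_diff)
  moreover have "rig_row d p f - y1 = y2" using y(1) by simp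
  ultimately have "y2 \<in> row_space d p E1" by simp
  moreover have "y2 \<in> row_space d p E2"
    using y(3) real_fun.span_mono[OF image_mono[of "E2 - {e}" E2]] by blast
  ultimately have "y2 \<in> real_fun.span {rig_row d p e}" using shared by blast
  moreover have "real_fun.span {rig_row d p e} \<subseteq> row_space d p (E1 - {f})"
    using assms(1-3) by (intro real_fun.span_mono) blast
  ultimately have "y1 + y2 \<in> row_space d p (E1 - {f})"
    using y1 real_fun.span_add by blast
  then show "rig_row d p f \<in> row_space d p (E1 - {f})" using y(1) by simp
next
  let ?E' = "(E1 \<union> E2) - {e} - {f}"
  assume "rig_row d p f \<in> row_space d p (E1 - {f})"
  moreover have "row_space d p (E1 - {f}) \<subseteq> real_fun.span (insert (rig_row d p e) (rig_row d p ` ?E'))"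
    by (intro real_fun.span_mono) blast
  moreover have "E2 - {e} \<subseteq> ?E'" using assms(1-3) by blast
  then have "rig_row d p e \<in> row_space d p ?E'"
    using e2 real_fun.span_mono[OF image_mono] by blast
  ultimately show "rig_row d p f \<in> row_space d p ?E'"
    using real_fun.span_redundant by blast
qed

lemma rig_rank_two_sum:
  assumes "finite E1" "finite E2" "E1 \<inter> E2 = {e}" "rig_row d p e \<noteq> 0"
    and shared: "row_space d p E1 \<inter> row_space d p E2 \<subseteq> real_fun.span {rig_row d p e}"
    and e1: "rig_row d p e \<in> row_space d p (E1 - {e})"
  shows "rig_rank d p ((E1 \<union> E2) - {e}) + 1 = rig_rank d p E1 + rig_rank d p E2"
proof -
  let ?E = "(E1 \<union> E2) - {e}"
  have "rig_row d p e \<in> row_space d p ?E"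
    using e1 real_fun.span_mono[OF image_mono[of "E1 - {e}" ?E]] by blast
  moreover have "rig_row d p ` (E1 \<union> E2) = insert (rig_row d p e) (rig_row d p ` ?E)"
    using assms(3) by auto
  ultimately have "row_space d p (E1 \<union> E2) = row_space d p ?E"
    using real_fun.span_redundant[of "rig_row d p e" "rig_row d p ` ?E"] by simp
  then have "rig_rank d p ?E = real_fun.dim (rig_row d p ` E1 \<union> rig_row d p ` E2)"
    using assms(1,2) real_fun.span_eq_dim by (metis finite_Diff finite_UnI image_Un rig_rank_eq_dim)
  moreover have "rig_row d p e \<in> rig_row d p ` E1" "rig_row d p e \<in> rig_row d p ` E2"
    using assms(3) by auto
  ultimately show ?thesis
    using real_fun.dim_Un_span_Int_singleton[OF finite_imageI[OF assms(1)] finite_imageI[OF assms(2)]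
        _ _ assms(4) shared] rig_rank_eq_dim[OF assms(1)] rig_rank_eq_dim[OF assms(2)]
    by simp
qed

lemma rig_cyclic_two_sum:
  assumes "finite E1" "finite E2" "E1 \<inter> E2 = {e}"
    and shared: "row_space d p E1 \<inter> row_space d p E2 \<subseteq> real_fun.span {rig_row d p e}"
    and e1: "rig_row d p e \<in> row_space d p (E1 - {e})"
    and e2: "rig_row d p e \<in> row_space d p (E2 - {e})"
  shows "rig_cyclic d p ((E1 \<union> E2) - {e}) \<longleftrightarrow> rig_cyclic d p E1 \<and> rig_cyclic d p E2"
proof -
  let ?E = "(E1 \<union> E2) - {e}"
  have in1: "rig_row d p f \<in> row_space d p (?E - {f}) \<longleftrightarrow> rig_row d p f \<in> row_space d p (E1 - {f})"
    if "f \<in> E1 - {e}" for f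
    using row_in_row_space_two_sum_iff[OF assms(3) _ _ shared e2] that by blast
  have in2: "rig_row d p f \<in> row_space d p (?E - {f}) \<longleftrightarrow> rig_row d p f \<in> row_space d p (E2 - {f})"
    if "f \<in> E2 - {e}" for f
    using row_in_row_space_two_sum_iff[of E2 E1 e f d p] assms(3) shared e1 that
    by (simp add: Int_commute Un_commute)
  have "finite ?E" using assms(1,2) by blast
  have "rig_cyclic d p ?E \<longleftrightarrow>
      (\<forall>f\<in>E1 - {e}. rig_row d p f \<in> row_space d p (?E - {f})) \<and>
      (\<forall>f\<in>E2 - {e}. rig_row d p f \<in> row_space d p (?E - {f}))"
    unfolding rig_cyclic_iff[OF \<open>finite ?E\<close>] by blast
  also have "\<dots> \<longleftrightarrow> (\<forall>f\<in>E1 - {e}. rig_row d p f \<in> row_space d p (E1 - {f})) \<and>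
      (\<forall>f\<in>E2 - {e}. rig_row d p f \<in> row_space d p (E2 - {f}))"
    using in1 in2 by simp
  also have "\<dots> \<longleftrightarrow> rig_cyclic d p E1 \<and> rig_cyclic d p E2"
    unfolding rig_cyclic_iff[OF assms(1)] rig_cyclic_iff[OF assms(2)] using e1 e2 by blast
  finally show ?thesis .
qed

lemma k_fold_circuit_two_sum_iff:
  assumes "finite E1" "finite E2" "E1 \<inter> E2 = {e}"
    and cyclic: "rig_cyclic d p ((E1 \<union> E2) - {e}) \<longleftrightarrow> rig_cyclic d p E1 \<and> rig_cyclic d p E2"
    and rank: "rig_rank d p ((E1 \<union> E2) - {e}) + 1 = rig_rank d p E1 + rig_rank d p E2"
  shows "k_fold_circuit d p k ((E1 \<union> E2) - {e}) \<longleftrightarrow>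
    (\<exists>k1 k2. k_fold_circuit d p k1 E1 \<and> k_fold_circuit d p k2 E2 \<and> k1 + k2 = k + 1)"
proof -
  let ?E = "(E1 \<union> E2) - {e}"
  have "Suc (card ?E) = card (E1 \<union> E2)"
    using card_Suc_Diff1[of "E1 \<union> E2" e] assms(1-3) by blast
  then have card: "card ?E + 2 = card E1 + card E2"
    using card_Un_Int[OF assms(1,2)] assms(3) by simp
  have ranks: "rig_rank d p E1 \<le> card E1" "rig_rank d p E2 \<le> card E2"
    using rig_rank_le_card assms(1,2) by auto
  show ?thesis
  proof
    let ?k1 = "card E1 - rig_rank d p E1" and ?k2 = "card E2 - rig_rank d p E2"
    assume "k_fold_circuit d p k ?E"
    then have "k_fold_circuit d p ?k1 E1 \<and> k_fold_circuit d p ?k2 E2 \<and> ?k1 + ?k2 = k + 1"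
      using cyclic rank card ranks by (auto simp: k_fold_circuit_iff)
    then show "\<exists>k1 k2. k_fold_circuit d p k1 E1 \<and> k_fold_circuit d p k2 E2 \<and> k1 + k2 = k + 1"
      by blast
  next
    assume "\<exists>k1 k2. k_fold_circuit d p k1 E1 \<and> k_fold_circuit d p k2 E2 \<and> k1 + k2 = k + 1"
    then show "k_fold_circuit d p k ?E"
      using cyclic rank card by (auto simp: k_fold_circuit_iff)
  qed
qed

lemma two_sum_row_spaces_meet_in_shared_edge:
  assumes "d \<ge> 1" "two_sum V1 E1 V2 E2 e V E" "generic d V p"
  shows "rig_row d p e \<noteq> 0"
    and "row_space d p E1 \<inter> row_space d p E2 \<subseteq> real_fun.span {rig_row d p e}"
proof -
  have G1: "simple_graph V1 E1" and G2: "simple_graph V2 E2" and "V1 \<inter> V2 = e"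
    and "E1 \<inter> E2 = {e}" and "V = V1 \<union> V2"
    using assms(2) unfolding two_sum_def by auto
  then have "finite V" "e \<in> E1" by (auto simp: simple_graph_def)
  then obtain u v where uv: "u \<noteq> v" "e = {u, v}" "u \<in> V1" "v \<in> V1"
    using simple_graph_edgeE[OF G1] by blast
  then have "u \<in> V" "v \<in> V" using \<open>V = V1 \<union> V2\<close> by auto
  have "p u 0 \<noteq> p v 0"
    using generic_coordinates_distinct[OF assms(3) \<open>finite V\<close> \<open>u \<in> V\<close> \<open>v \<in> V\<close> uv(1)] assms(1) by simp
  then show "rig_row d p e \<noteq> 0"
    using uv(1,2) assms(1) by (auto simp: fun_eq_iff rig_row_doubleton intro!: exI[of _ "(u, 0)"])
  show "row_space d p E1 \<inter> row_space d p E2 \<subseteq> real_fun.span {rig_row d p e}"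
    using row_space_Int_subset_shared_edge[where d = d and p = p and k = 0, OF G1 G2 _ uv(1) _
        \<open>p u 0 \<noteq> p v 0\<close>] \<open>V1 \<inter> V2 = e\<close> uv(2) assms(1) by simp
qed

theorem lemma3p4:
  fixes d k :: nat and p :: "'a \<Rightarrow> nat \<Rightarrow> real"
    and V1 V2 V :: "'a set" and E1 E2 E :: "'a set set" and e :: "'a set"
  assumes "d \<ge> 1"
    and "two_sum V1 E1 V2 E2 e V E"
    and "generic d V p"
    and "\<not> rig_coloop d p E1 e"
    and "\<not> rig_coloop d p E2 e"
  shows "k_fold_circuit d p k E \<longleftrightarrow>
         (\<exists>k1 k2. k_fold_circuit d p k1 E1 \<and> k_fold_circuit d p k2 E2 \<and> k1 + k2 = k + 1)"
proof -
  have fin: "finite E1" "finite E2" and shared_edge: "E1 \<inter> E2 = {e}" and E: "E = (E1 \<union> E2) - {e}"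
    using assms(2) simple_graph_finite_edges unfolding two_sum_def by auto
  note row_e = two_sum_row_spaces_meet_in_shared_edge[OF assms(1-3)]
  have "e \<in> E1" "e \<in> E2" using shared_edge by auto
  then have e_rows: "rig_row d p e \<in> row_space d p (E1 - {e})" "rig_row d p e \<in> row_space d p (E2 - {e})"
    using not_coloop_row_in_row_space fin assms(4,5) by auto
  show ?thesis
    unfolding E
  proof (rule k_fold_circuit_two_sum_iff[OF fin shared_edge])
    show "rig_cyclic d p ((E1 \<union> E2) - {e}) \<longleftrightarrow> rig_cyclic d p E1 \<and> rig_cyclic d p E2"
      by (rule rig_cyclic_two_sum[OF fin shared_edge row_e(2) e_rows])
    show "rig_rank d p ((E1 \<union> E2) - {e}) + 1 = rig_rank d p E1 + rig_rank d p E2"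
      by (rule rig_rank_two_sum[OF fin shared_edge row_e e_rows(1)])
  qed
qed

end
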